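(* Let $\tau>\tau_0>0$, $\gamma>0$, $\phi_0>0$ and $\varepsilon>0$. Let $\phi(t)\equiv\phi_0$ on $[-\tau,0]$, set $$A=\frac{\gamma(\phi_0+\varepsilon)}{1-e^{-\gamma(\tau-\tau_0)}},$$ and for $\delta>0$ let $f_\delta:\mathbb{R}\to\mathbb{R}$, $f_\delta(u)=A\,e^{-(u-\phi_0)^2/\delta}$. Let $u_\delta$ be the solution on $[-\tau,\infty)$ of $$u'(t)=-\gamma u(t)+f_\delta(u(t-\tau_0))-f_\delta(u(t-\tau))e^{-\gamma(\tau-\tau_0)}\ (t>0),\qquad u(t)=\phi(t)\ (-\tau\le t\le0).$$ Then $H_0(\phi):=\phi(0)-\int_{\tau_0}^{\tau}f_\delta(\phi(-a))e^{-\gamma(a-\tau_0)}da=-\varepsilon$ for every $\delta>0$, and there exists $\delta_0>0$ such that $u_\delta(\tau)<0$ for all $0<\delta<\delta_0$. *)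

theory Defs
  imports "HOL-Analysis.Analysis"
begin

definition f_delta :: "real \<Rightarrow> real \<Rightarrow> real \<Rightarrow> real \<Rightarrow> real" where
  "f_delta A phi0 \<delta> u = A * exp (- ((u - phi0)^2) / \<delta>)"

definition is_solution ::
  "real \<Rightarrow> real \<Rightarrow> real \<Rightarrow> (real \<Rightarrow> real) \<Rightarrow> (real \<Rightarrow> real) \<Rightarrow> (real \<Rightarrow> real) \<Rightarrow> bool" where
  "is_solution \<tau> \<tau>0 \<gamma> f \<phi> u \<longleftrightarrow>
     continuous_on {-\<tau>..} u \<and>
     (\<forall>t\<in>{-\<tau>..0}. u t = \<phi> t) \<and>
     (\<forall>t>0. (u has_real_derivative
          (- \<gamma> * u t + f (u (t - \<tau>0)) - f (u (t - \<tau>)) * exp (- \<gamma> * (\<tau> - \<tau>0)))) (at t))"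

end

theory Submission
  imports Defs
begin

text \<open>
  The first claim is a direct computation: on the constant history
  \<open>f\<^sub>\<delta>(\<phi>\<^sub>0) = A\<close>, and \<open>A\<close> is chosen so that \<open>A \<integral>\<^sub>\<tau>\<^sub>0\<^sup>\<tau> exp(-\<gamma>(a - \<tau>\<^sub>0)) da = \<phi>\<^sub>0 + \<epsilon>\<close>.
  For the second claim we follow the solution over \<open>[0,\<tau>]\<close>.  On \<open>[0,\<tau>\<^sub>0]\<close> both delayed
  arguments lie in the history, and \<open>u\<close> relaxes explicitly from \<open>\<phi>\<^sub>0\<close> towards \<open>\<phi>\<^sub>0 + \<epsilon>\<close>.
  On \<open>[\<tau>\<^sub>0,\<tau>]\<close> only the longer delay sees the history, so \<open>u + Q\<close> solves a linear
  relaxation equation forced by \<open>F(t) = f\<^sub>\<delta>(u(t - \<tau>\<^sub>0)) \<ge> 0\<close>; hence \<open>v \<le> u \<le> v + \<integral> F\<close> for the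
  free decay \<open>v\<close>, which ends at \<open>v(\<tau>) = -\<theta> < 0\<close>.  It remains to show \<open>\<integral> F < \<theta>\<close> for small
  \<open>\<delta>\<close>.  The Gaussian is large only near \<open>\<phi>\<^sub>0\<close>, and \<open>u\<close> comes close to \<open>\<phi>\<^sub>0\<close> only in an
  initial layer \<open>[0,s\<^sub>1]\<close> and in a window around the time \<open>c\<close> where \<open>v\<close> crosses \<open>\<phi>\<^sub>0\<close>;
  elsewhere it keeps a distance \<open>\<mu>\<close>, so \<open>f\<^sub>\<delta>(u) \<le> A exp(-\<mu>\<^sup>2/\<delta>)\<close>.  After the crossing this
  separation itself depends on the forcing at earlier times, so it is proved by the method
  of steps with lag \<open>\<tau>\<^sub>0\<close>.
\<close>

section \<open>General facts about linear relaxation equations\<close>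

text \<open>Variation of constants for \<open>y' = -\<gamma> y + g\<close>: the function
  \<open>exp(\<gamma> x) y(x) - \<integral>\<^sub>a\<^sup>x exp(\<gamma> r) g(r) dr\<close> has derivative zero, hence is constant.\<close>
lemma variation_of_constants:
  fixes y g :: "real \<Rightarrow> real" and \<gamma> a t :: real
  assumes "a \<le> t" and y_cont: "continuous_on {a..t} y" and g_cont: "continuous_on {a..t} g"
    and y_deriv: "\<And>x. a < x \<Longrightarrow> x < t \<Longrightarrow> (y has_real_derivative - \<gamma> * y x + g x) (at x)"
  shows "exp (\<gamma> * t) * y t = exp (\<gamma> * a) * y a + integral {a..t} (\<lambda>r. exp (\<gamma> * r) * g r)"
proof (cases "a = t")
  case False
  then have "a < t" using assms(1) by simp
  define h where "h r = exp (\<gamma> * r) * g r" for r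
  define q where "q x = exp (\<gamma> * x) * y x - integral {a..x} h" for x
  have h_cont: "continuous_on {a..t} h"
    unfolding h_def by (intro continuous_intros g_cont)
  have q_cont: "continuous_on {a..t} q"
    unfolding q_def
    by (intro continuous_intros y_cont indefinite_integral_continuous_1
        integrable_continuous_interval h_cont)
  have q_deriv: "(q has_real_derivative 0) (at x)" if x: "a < x" "x < t" for x
  proof -
    have "((\<lambda>x. integral {a..x} h) has_real_derivative h x) (at x within {a<..<t})"
      using integral_has_real_derivative[OF h_cont, of x] x
      by (auto intro: DERIV_subset)
    then have int_deriv: "((\<lambda>x. integral {a..x} h) has_real_derivative h x) (at x)"
      using at_within_open[of x "{a<..<t}"] x by simp
    have exp_deriv: "((\<lambda>x. exp (\<gamma> * x)) has_real_derivative \<gamma> * exp (\<gamma> * x)) (at x)"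
      by (auto intro!: derivative_eq_intros)
    have "(q has_real_derivative
        \<gamma> * exp (\<gamma> * x) * y x + (- \<gamma> * y x + g x) * exp (\<gamma> * x) - h x) (at x)"
      unfolding q_def by (rule DERIV_diff[OF DERIV_mult[OF exp_deriv y_deriv[OF x]] int_deriv])
    moreover have "\<gamma> * exp (\<gamma> * x) * y x + (- \<gamma> * y x + g x) * exp (\<gamma> * x) - h x = 0"
      by (simp add: h_def algebra_simps)
    ultimately show ?thesis by simp
  qed
  have "q t = q a"
    by (rule DERIV_isconst2[OF \<open>a < t\<close> q_cont q_deriv]) (use \<open>a < t\<close> in auto)
  then show ?thesis unfolding q_def h_def by simp
qed simp

lemma relaxation_bounds:
  fixes y g :: "real \<Rightarrow> real" and \<gamma> a t :: real
  assumes "a \<le> t" and "0 \<le> \<gamma>"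
    and "continuous_on {a..t} y" and g_cont: "continuous_on {a..t} g"
    and "\<And>x. a < x \<Longrightarrow> x < t \<Longrightarrow> (y has_real_derivative - \<gamma> * y x + g x) (at x)"
    and g_nonneg: "\<And>x. x \<in> {a..t} \<Longrightarrow> 0 \<le> g x"
  shows "exp (- \<gamma> * (t - a)) * y a \<le> y t"
    and "y t \<le> exp (- \<gamma> * (t - a)) * y a + integral {a..t} g"
proof -
  define I where "I = integral {a..t} (\<lambda>r. exp (\<gamma> * r - \<gamma> * t) * g r)"
  have "exp (- \<gamma> * t) * (exp (\<gamma> * t) * y t)
      = exp (- \<gamma> * t) * (exp (\<gamma> * a) * y a + integral {a..t} (\<lambda>r. exp (\<gamma> * r) * g r))"
    using variation_of_constants[OF assms(1,3,4,5)] by simp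
  then have y_t: "y t = exp (- \<gamma> * (t - a)) * y a + I"
    unfolding I_def by (simp add: exp_diff exp_minus field_simps)
  have integrable: "(\<lambda>r. exp (\<gamma> * r - \<gamma> * t) * g r) integrable_on {a..t}"
    by (intro integrable_continuous_interval continuous_intros g_cont)
  have "0 \<le> I"
    unfolding I_def by (intro integral_nonneg integrable) (simp add: g_nonneg)
  then show "exp (- \<gamma> * (t - a)) * y a \<le> y t" using y_t by simp
  have "I \<le> integral {a..t} g"
    unfolding I_def
  proof (rule integral_le[OF integrable integrable_continuous_interval[OF g_cont]])
    fix r assume r: "r \<in> {a..t}"
    have "exp (\<gamma> * r - \<gamma> * t) \<le> 1" using r \<open>0 \<le> \<gamma>\<close> by (simp add: mult_left_mono)
    then show "exp (\<gamma> * r - \<gamma> * t) * g r \<le> g r"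
      using g_nonneg[OF r] by (simp add: mult_left_le_one_le)
  qed
  then show "y t \<le> exp (- \<gamma> * (t - a)) * y a + integral {a..t} g" using y_t by simp
qed

text \<open>A lower bound for the decrement of \<open>exp(-\<gamma> x)\<close> over \<open>[a,b] \<subseteq> (-\<infinity>,T]\<close>: by convexity
  the decrement is at least the length of the interval times the slope at \<open>T\<close>.\<close>
lemma exp_decrement_lower_bound:
  fixes \<gamma> a b T :: real
  assumes "0 \<le> \<gamma>" and "a \<le> b" and "b \<le> T"
  shows "\<gamma> * exp (- \<gamma> * T) * (b - a) \<le> exp (- \<gamma> * a) - exp (- \<gamma> * b)"
proof -
  have "exp (- \<gamma> * b) * (1 + \<gamma> * (b - a)) \<le> exp (- \<gamma> * b) * exp (\<gamma> * (b - a))"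
    by (intro mult_left_mono) (auto simp: exp_ge_add_one_self)
  also have "\<dots> = exp (- \<gamma> * a)"
    by (simp add: exp_add[symmetric] algebra_simps)
  finally have decrement: "exp (- \<gamma> * b) * (\<gamma> * (b - a)) \<le> exp (- \<gamma> * a) - exp (- \<gamma> * b)"
    by (simp add: algebra_simps)
  have "exp (- \<gamma> * T) \<le> exp (- \<gamma> * b)"
    using assms by (simp add: mult_left_mono)
  then have "exp (- \<gamma> * T) * (\<gamma> * (b - a)) \<le> exp (- \<gamma> * b) * (\<gamma> * (b - a))"
    using assms by (intro mult_right_mono) auto
  with decrement show ?thesis by (simp add: algebra_simps)
qed

lemma method_of_steps:
  fixes R :: "real \<Rightarrow> bool" and h L s :: real
  assumes "0 < h"
    and step: "\<And>s. 0 \<le> s \<Longrightarrow> s \<le> L \<Longrightarrow> (\<And>r. 0 \<le> r \<Longrightarrow> r \<le> s - h \<Longrightarrow> R r) \<Longrightarrow> R s"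
    and "0 \<le> s" and "s \<le> L"
  shows "R s"
proof -
  have "\<forall>s. 0 \<le> s \<longrightarrow> s \<le> L \<longrightarrow> s \<le> real n * h \<longrightarrow> R s" for n
  proof (induction n)
    case 0
    show ?case
    proof (intro allI impI)
      fix s assume s: "0 \<le> s" "s \<le> L" "s \<le> real 0 * h"
      show "R s"
      proof (rule step[OF s(1,2)])
        fix r assume "0 \<le> r" "r \<le> s - h"
        then show "R r" using s \<open>0 < h\<close> by linarith
      qed
    qed
  next
    case (Suc n)
    show ?case
    proof (intro allI impI)
      fix s assume s: "0 \<le> s" "s \<le> L" "s \<le> real (Suc n) * h"
      show "R s"
      proof (rule step[OF s(1,2)])
        fix r assume r: "0 \<le> r" "r \<le> s - h"
        have "r \<le> real n * h" using r(2) s(3) by (simp add: algebra_simps)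
        moreover have "r \<le> L" using r s \<open>0 < h\<close> by linarith
        ultimately show "R r" using Suc.IH r(1) by blast
      qed
    qed
  qed
  moreover obtain n where "s < real n * h"
    using reals_Archimedean3[OF \<open>0 < h\<close>] by blast
  ultimately show ?thesis using assms(3,4) less_imp_le by blast
qed

lemma restricted_constant_has_integral:
  fixes a b x y C :: real
  assumes "a \<le> b"
  shows "((\<lambda>r. if r \<in> {x..y} then C else 0) has_integral
          (if max x a \<le> min y b then min y b - max x a else 0) * C) {a..b}"
proof -
  have "((\<lambda>r. C) has_integral Henstock_Kurzweil_Integration.content {max x a..min y b} *\<^sub>R C) ({x..y} \<inter> {a..b})"
    using has_integral_const_real[of C "max x a" "min y b"] by (simp add: Int_atLeastAtMost)
  then show ?thesis
    by (subst has_integral_restrict_Int) simp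
qed

section \<open>The Gaussian nonlinearity\<close>

lemma f_delta_at_center: "f_delta A \<phi>0 \<delta> \<phi>0 = A"
  by (simp add: f_delta_def)

lemma f_delta_bounds:
  assumes "0 \<le> A"
  shows "0 \<le> f_delta A \<phi>0 \<delta> x" and "0 < \<delta> \<Longrightarrow> f_delta A \<phi>0 \<delta> x \<le> A"
  using assms by (auto simp: f_delta_def mult_left_le)

lemma f_delta_continuous: "0 < \<delta> \<Longrightarrow> continuous_on UNIV (f_delta A \<phi>0 \<delta>)"
  unfolding f_delta_def by (intro continuous_intros) auto

text \<open>Away from its centre the Gaussian is uniformly small: this is what makes the forcing
  negligible for \<open>\<delta> \<rightarrow> 0\<close> except while the solution passes near \<open>\<phi>\<^sub>0\<close>.\<close>
lemma f_delta_tail: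
  assumes "0 \<le> A" and "0 < \<delta>" and "0 \<le> \<mu>" and "\<mu> \<le> \<bar>x - \<phi>0\<bar>"
  shows "f_delta A \<phi>0 \<delta> x \<le> A * exp (- (\<mu>\<^sup>2) / \<delta>)"
proof -
  have "\<mu>\<^sup>2 \<le> (x - \<phi>0)\<^sup>2"
    using assms(3,4) by (metis abs_le_square_iff abs_of_nonneg)
  then have "\<mu>\<^sup>2 / \<delta> \<le> (x - \<phi>0)\<^sup>2 / \<delta>"
    using assms(2) by (simp add: divide_right_mono)
  then show ?thesis
    unfolding f_delta_def using assms(1) by (intro mult_left_mono) auto
qed

section \<open>The delay problem and its constants\<close>

text \<open>The amplitude \<open>A\<close> is chosen so that the constant
  history yields \<open>H\<^sub>0(\<phi>) = -\<epsilon>\<close>.\<close>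
locale delay_problem =
  fixes \<tau> \<tau>0 \<gamma> \<phi>0 \<epsilon> :: real
  assumes tau0_pos: "0 < \<tau>0" and tau0_less: "\<tau>0 < \<tau>" and gamma_pos: "0 < \<gamma>"
    and phi0_pos: "0 < \<phi>0" and eps_pos: "0 < \<epsilon>"
begin

definition E :: real where "E = exp (- \<gamma> * (\<tau> - \<tau>0))"
definition A :: real where "A = \<gamma> * (\<phi>0 + \<epsilon>) / (1 - E)"
definition L :: real where "L = \<tau> - \<tau>0"

text \<open>On \<open>[\<tau>\<^sub>0,\<tau>]\<close> the delayed loss term equals the constant \<open>A E = \<gamma> Q\<close>, and \<open>u + Q\<close> obeys
  \<open>(u + Q)' = -\<gamma> (u + Q) + f(u(t - \<tau>\<^sub>0))\<close>.  Dropping the nonnegative forcing gives the lower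
  envelope \<open>v\<close>, which starts at \<open>u(\<tau>\<^sub>0) = P - Q\<close>, decreases with slope at least \<open>\<kappa>\<close> and
  ends at \<open>v(\<tau>) = -\<theta> < 0\<close>.\<close>
definition Q :: real where "Q = A * E / \<gamma>"
definition P :: real where "P = \<phi>0 + \<epsilon> - \<epsilon> * exp (- \<gamma> * \<tau>0) + Q"
definition v :: "real \<Rightarrow> real" where "v t = exp (- \<gamma> * (t - \<tau>0)) * P - Q"
definition \<theta> :: real where "\<theta> = \<epsilon> * exp (- \<gamma> * \<tau>)"
definition \<kappa> :: real where "\<kappa> = \<gamma> * E * P"

lemma E_bounds: "0 < E" "E < 1"
  unfolding E_def using tau0_less gamma_pos by auto

lemma A_balance: "A * (1 - E) = \<gamma> * (\<phi>0 + \<epsilon>)"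
  unfolding A_def using E_bounds by simp

lemma A_pos: "0 < A"
  unfolding A_def using E_bounds gamma_pos phi0_pos eps_pos by simp

lemma gamma_Q: "\<gamma> * Q = A * E"
  unfolding Q_def using gamma_pos by simp

lemma Q_pos: "0 < Q"
  unfolding Q_def using A_pos E_bounds gamma_pos by simp

lemma L_pos: "0 < L"
  unfolding L_def using tau0_less by simp

lemma theta_pos: "0 < \<theta>"
  unfolding \<theta>_def using eps_pos by simp

lemma v_tau0: "v \<tau>0 = \<phi>0 + \<epsilon> - \<epsilon> * exp (- \<gamma> * \<tau>0)"
  unfolding v_def P_def by simp

lemma v_tau0_above: "\<phi>0 < v \<tau>0"
  unfolding v_tau0 using eps_pos gamma_pos tau0_pos by simp

lemma P_pos: "0 < P"
  using v_tau0_above Q_pos phi0_pos unfolding v_def by simp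

lemma kappa_pos: "0 < \<kappa>"
  unfolding \<kappa>_def using gamma_pos E_bounds P_pos by simp

lemma v_tau: "v \<tau> = - \<theta>"
proof -
  have "Q * (1 - E) = E * (A * (1 - E)) / \<gamma>"
    unfolding Q_def by (simp add: algebra_simps)
  also have "\<dots> = E * (\<phi>0 + \<epsilon>)"
    using A_balance gamma_pos by simp
  finally have Q_E: "Q * (1 - E) = E * (\<phi>0 + \<epsilon>)" .
  have E_tau0: "E * exp (- \<gamma> * \<tau>0) = exp (- \<gamma> * \<tau>)"
    unfolding E_def by (simp add: exp_add[symmetric] algebra_simps)
  have "v \<tau> = E * (\<phi>0 + \<epsilon> - \<epsilon> * exp (- \<gamma> * \<tau>0)) - Q * (1 - E)"
    unfolding v_def P_def E_def by (simp add: algebra_simps)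
  then show ?thesis
    unfolding \<theta>_def Q_E using E_tau0 by (simp add: algebra_simps)
qed

lemma v_slope:
  assumes "\<tau>0 \<le> a" and "a \<le> b" and "b \<le> \<tau>"
  shows "\<kappa> * (b - a) \<le> v a - v b"
proof -
  have "\<gamma> * E * ((b - \<tau>0) - (a - \<tau>0))
      \<le> exp (- \<gamma> * (a - \<tau>0)) - exp (- \<gamma> * (b - \<tau>0))"
    unfolding E_def using assms gamma_pos by (intro exp_decrement_lower_bound) auto
  then have "P * (\<gamma> * E * (b - a)) \<le> P * (exp (- \<gamma> * (a - \<tau>0)) - exp (- \<gamma> * (b - \<tau>0)))"
    using P_pos by (intro mult_left_mono) auto
  then show ?thesis
    unfolding \<kappa>_def v_def by (simp add: algebra_simps)
qed

text \<open>The time \<open>c \<in> [\<tau>\<^sub>0,\<tau>]\<close> at which the lower envelope crosses the centre \<open>\<phi>\<^sub>0\<close> of the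
  Gaussian; only near \<open>c\<close> (and shortly after \<open>0\<close>) can the solution feel the full forcing.\<close>
definition c :: real where "c = (SOME c. \<tau>0 \<le> c \<and> c \<le> \<tau> \<and> v c = \<phi>0)"

lemma crossing: "\<tau>0 \<le> c" "c \<le> \<tau>" "v c = \<phi>0"
proof -
  have "isCont v x" for x
    unfolding v_def by (intro continuous_intros)
  then have "\<exists>c. \<tau>0 \<le> c \<and> c \<le> \<tau> \<and> v c = \<phi>0"
    using IVT2[of v \<tau> \<phi>0 \<tau>0] v_tau theta_pos phi0_pos v_tau0_above tau0_less by auto
  then have "\<tau>0 \<le> c \<and> c \<le> \<tau> \<and> v c = \<phi>0"
    unfolding c_def by (rule someI_ex)
  then show "\<tau>0 \<le> c" "c \<le> \<tau>" "v c = \<phi>0" by auto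
qed

text \<open>Quantitative choices: the half-width \<open>w\<close> of the window around the crossing, the
  length \<open>s\<^sub>1\<close> of the initial layer in which \<open>u\<close> is still close to \<open>\<phi>\<^sub>0\<close>, the budget \<open>m\<close> for
  the Gaussian tails, the distance \<open>\<mu>\<close> from \<open>\<phi>\<^sub>0\<close> kept outside these two windows, and the
  critical width \<open>\<delta>_crit\<close> below which the tails fit into the budget.\<close>
definition w :: real where "w = min (\<tau>0 / 2) (min \<theta> (\<kappa> * \<tau>0) / (32 * A))"
definition s1 :: real where "s1 = min (\<kappa> * w) \<theta> / (4 * A)"
definition m :: real where "m = min (\<kappa> * w / 4) (min (\<kappa> * \<tau>0 / 16) (\<theta> / 4))"
definition \<mu> :: real where "\<mu> = min (\<epsilon> * (1 - exp (- \<gamma> * s1))) (\<kappa> * w / 2)"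
definition \<delta>_crit :: real where "\<delta>_crit = \<mu>\<^sup>2 / (\<bar>ln (L * A / m)\<bar> + 1)"

lemma window_bounds: "0 < w" "w \<le> \<tau>0 / 2" "2 * A * w \<le> \<kappa> * \<tau>0 / 16" "2 * A * w \<le> \<theta> / 16"
proof -
  show "0 < w" unfolding w_def using tau0_pos theta_pos kappa_pos A_pos by simp
  show "w \<le> \<tau>0 / 2" unfolding w_def by simp
  have "w \<le> min \<theta> (\<kappa> * \<tau>0) / (32 * A)"
    unfolding w_def by simp
  then have "w * (32 * A) \<le> min \<theta> (\<kappa> * \<tau>0)"
    using A_pos by (simp add: pos_le_divide_eq)
  then show "2 * A * w \<le> \<kappa> * \<tau>0 / 16" "2 * A * w \<le> \<theta> / 16"
    by (auto simp: algebra_simps)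
qed

lemma layer_bounds: "0 < s1" "A * s1 \<le> \<kappa> * w / 4" "A * s1 \<le> \<theta> / 4"
proof -
  show "0 < s1" unfolding s1_def using kappa_pos window_bounds theta_pos A_pos by simp
  have "A * s1 = min (\<kappa> * w) \<theta> / 4" unfolding s1_def using A_pos by simp
  then show "A * s1 \<le> \<kappa> * w / 4" "A * s1 \<le> \<theta> / 4" by auto
qed

lemma budget_bounds: "0 < m" "m \<le> \<kappa> * w / 4" "m \<le> \<kappa> * \<tau>0 / 16" "m \<le> \<theta> / 4"
  unfolding m_def using kappa_pos window_bounds(1) tau0_pos theta_pos by auto

lemma separation_bounds: "0 < \<mu>" "\<mu> \<le> \<epsilon> * (1 - exp (- \<gamma> * s1))" "\<mu> \<le> \<kappa> * w / 2"
  unfolding \<mu>_def using eps_pos gamma_pos layer_bounds(1) kappa_pos window_bounds(1) by auto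

lemma delta_crit_pos: "0 < \<delta>_crit"
  unfolding \<delta>_crit_def using separation_bounds(1) by (simp add: add_pos_nonneg)

lemma tail_small:
  assumes "0 < \<delta>" and "\<delta> < \<delta>_crit"
  shows "L * A * exp (- (\<mu>\<^sup>2) / \<delta>) < m"
proof -
  have ratio_pos: "0 < L * A / m"
    using L_pos A_pos budget_bounds(1) by simp
  have "\<mu>\<^sup>2 / \<delta>_crit = \<bar>ln (L * A / m)\<bar> + 1"
    unfolding \<delta>_crit_def using separation_bounds(1) by (simp add: add_pos_nonneg)
  moreover have "\<mu>\<^sup>2 / \<delta>_crit < \<mu>\<^sup>2 / \<delta>"
    using assms separation_bounds(1) by (simp add: divide_strict_left_mono)
  ultimately have "ln (L * A / m) < \<mu>\<^sup>2 / \<delta>" by linarith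
  then have "exp (- (\<mu>\<^sup>2) / \<delta>) < exp (- ln (L * A / m))" by simp
  also have "\<dots> = m / (L * A)"
    using ratio_pos by (simp add: exp_minus)
  finally show ?thesis using L_pos A_pos by (simp add: field_simps)
qed

text \<open>First claim of the proposition: for the constant history the functional \<open>H\<^sub>0\<close> equals
  \<open>-\<epsilon>\<close>, whatever \<open>\<delta>\<close> is, because \<open>f\<^sub>\<delta>(\<phi>\<^sub>0) = A\<close> and \<open>A \<integral>\<^sub>\<tau>\<^sub>0\<^sup>\<tau> exp(-\<gamma>(a - \<tau>\<^sub>0)) da = \<phi>\<^sub>0 + \<epsilon>\<close>.\<close>
lemma history_functional:
  assumes history: "\<forall>t\<in>{-\<tau>..0}. \<phi> t = \<phi>0"
  shows "\<phi> 0 - integral {\<tau>0..\<tau>} (\<lambda>a. f_delta A \<phi>0 \<delta> (\<phi> (- a)) * exp (- \<gamma> * (a - \<tau>0))) = - \<epsilon>"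
proof -
  have "integral {\<tau>0..\<tau>} (\<lambda>a. f_delta A \<phi>0 \<delta> (\<phi> (- a)) * exp (- \<gamma> * (a - \<tau>0)))
      = integral {\<tau>0..\<tau>} (\<lambda>a. A * exp (- \<gamma> * (a - \<tau>0)))"
    using history tau0_pos by (intro integral_cong) (auto simp: f_delta_at_center)
  also have "\<dots> = - A / \<gamma> * exp (- \<gamma> * (\<tau> - \<tau>0)) - - A / \<gamma> * exp (- \<gamma> * (\<tau>0 - \<tau>0))"
  proof (rule integral_unique, rule fundamental_theorem_of_calculus)
    show "\<tau>0 \<le> \<tau>" using tau0_less by simp
    fix x
    have "((\<lambda>a. - A / \<gamma> * exp (- \<gamma> * (a - \<tau>0))) has_real_derivative
        - A / \<gamma> * (exp (- \<gamma> * (x - \<tau>0)) * (- \<gamma> * (1 - 0)))) (at x within {\<tau>0..\<tau>})"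
      by (intro derivative_eq_intros) auto
    then show "((\<lambda>a. - A / \<gamma> * exp (- \<gamma> * (a - \<tau>0))) has_vector_derivative
        A * exp (- \<gamma> * (x - \<tau>0))) (at x within {\<tau>0..\<tau>})"
      using gamma_pos by (simp add: has_real_derivative_iff_has_vector_derivative)
  qed
  also have "\<dots> = A * (1 - E) / \<gamma>"
    unfolding E_def using gamma_pos by (simp add: field_simps)
  also have "\<dots> = \<phi>0 + \<epsilon>"
    using A_balance gamma_pos by simp
  finally show ?thesis
    using history tau0_less tau0_pos by simp
qed

end

section \<open>The solution for a fixed width \<open>\<delta>\<close>\<close>

locale delay_solution = delay_problem +
  fixes \<phi> U :: "real \<Rightarrow> real" and \<delta> :: real
  assumes history: "\<forall>t\<in>{-\<tau>..0}. \<phi> t = \<phi>0"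
    and delta_pos: "0 < \<delta>" and delta_small: "\<delta> < \<delta>_crit"
    and solution: "is_solution \<tau> \<tau>0 \<gamma> (f_delta A \<phi>0 \<delta>) \<phi> U"
begin

abbreviation f :: "real \<Rightarrow> real" where "f \<equiv> f_delta A \<phi>0 \<delta>"

definition F :: "real \<Rightarrow> real" where "F r = f (U (r - \<tau>0))"

lemma f_bounds: "0 \<le> f x" "f x \<le> A"
  using f_delta_bounds[OF less_imp_le[OF A_pos]] delta_pos by auto

lemma U_continuous: "continuous_on {-\<tau>..} U"
  using solution unfolding is_solution_def by auto

lemma U_history: "-\<tau> \<le> t \<Longrightarrow> t \<le> 0 \<Longrightarrow> U t = \<phi>0"
  using solution history unfolding is_solution_def by auto

lemma U_deriv:
  "0 < t \<Longrightarrow> (U has_real_derivative - \<gamma> * U t + f (U (t - \<tau>0)) - f (U (t - \<tau>)) * E) (at t)"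
  using solution unfolding is_solution_def E_def by auto

text \<open>On \<open>[0,\<tau>\<^sub>0]\<close> both delayed arguments lie in the constant history, so the equation reads
  \<open>u' = -\<gamma> (u - (\<phi>\<^sub>0 + \<epsilon>))\<close> and \<open>u\<close> relaxes from \<open>\<phi>\<^sub>0\<close> towards \<open>\<phi>\<^sub>0 + \<epsilon>\<close>.\<close>
lemma U_first_interval:
  assumes "0 \<le> s" and "s \<le> \<tau>0"
  shows "U s = \<phi>0 + \<epsilon> - \<epsilon> * exp (- \<gamma> * s)"
proof -
  define y where "y x = U x - (\<phi>0 + \<epsilon>)" for x
  have "exp (\<gamma> * s) * y s = exp (\<gamma> * 0) * y 0 + integral {0..s} (\<lambda>r. exp (\<gamma> * r) * 0)"
  proof (rule variation_of_constants[where g = "\<lambda>_. 0", OF assms(1)])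
    show "continuous_on {0..s} y"
      unfolding y_def using tau0_less tau0_pos
      by (intro continuous_intros continuous_on_subset[OF U_continuous]) auto
    show "continuous_on {0..s} (\<lambda>_. 0 :: real)" by simp
    fix x assume x: "0 < x" "x < s"
    have "U (x - \<tau>0) = \<phi>0" "U (x - \<tau>) = \<phi>0"
      using U_history x assms tau0_less by auto
    then have "(U has_real_derivative - \<gamma> * U x + A - A * E) (at x)"
      using U_deriv[of x] x by (simp add: f_delta_at_center)
    then have "(y has_real_derivative (- \<gamma> * U x + A - A * E) - 0) (at x)"
      unfolding y_def by (rule DERIV_diff[OF _ DERIV_const])
    moreover have "- \<gamma> * U x + A - A * E - 0 = - \<gamma> * y x + 0"
      unfolding y_def using A_balance by (simp add: algebra_simps)
    ultimately show "(y has_real_derivative - \<gamma> * y x + 0) (at x)" by (simp only:)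
  qed
  moreover have "y 0 = - \<epsilon>"
    unfolding y_def using U_history tau0_less tau0_pos by simp
  ultimately have "exp (\<gamma> * s) * y s = - \<epsilon>" by simp
  then have "y s = - \<epsilon> * exp (- \<gamma> * s)"
    by (simp add: exp_minus field_simps)
  then show ?thesis unfolding y_def by simp
qed

lemma F_nonneg: "0 \<le> F r"
  unfolding F_def by (rule f_bounds(1))

lemma F_continuous: "continuous_on {\<tau>0..t} F"
proof -
  have "continuous_on {\<tau>0..t} (\<lambda>r. U (r - \<tau>0))"
    by (rule continuous_on_compose2[OF U_continuous])
      (use tau0_less tau0_pos in \<open>auto intro!: continuous_intros\<close>)
  then show ?thesis
    unfolding F_def by (rule continuous_on_compose2[OF f_delta_continuous[OF delta_pos]]) auto
qed

text \<open>On \<open>[\<tau>\<^sub>0,\<tau>]\<close> the longer delay still sees the history, so \<open>u + Q\<close> solves a relaxation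
  equation forced by \<open>F \<ge> 0\<close>: \<open>u\<close> lies between the envelope \<open>v\<close> and \<open>v + \<integral> F\<close>.\<close>
lemma U_second_interval:
  assumes "\<tau>0 \<le> t" and "t \<le> \<tau>"
  shows "v t \<le> U t" and "U t \<le> v t + integral {\<tau>0..t} F"
proof -
  define y where "y x = U x + Q" for x
  have y_cont: "continuous_on {\<tau>0..t} y"
    unfolding y_def using tau0_less tau0_pos
    by (intro continuous_intros continuous_on_subset[OF U_continuous]) auto
  have y_deriv: "(y has_real_derivative - \<gamma> * y x + F x) (at x)" if x: "\<tau>0 < x" "x < t" for x
  proof -
    have "U (x - \<tau>) = \<phi>0"
      using U_history x assms tau0_pos by auto
    then have "(U has_real_derivative - \<gamma> * U x + F x - A * E) (at x)"
      using U_deriv[of x] x tau0_pos by (simp add: F_def f_delta_at_center)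
    then have "(y has_real_derivative (- \<gamma> * U x + F x - A * E) + 0) (at x)"
      unfolding y_def by (rule DERIV_add[OF _ DERIV_const])
    moreover have "- \<gamma> * U x + F x - A * E + 0 = - \<gamma> * y x + F x"
      unfolding y_def using gamma_Q by (simp add: algebra_simps)
    ultimately show ?thesis by (simp only:)
  qed
  have "y \<tau>0 = P"
    unfolding y_def P_def using U_first_interval[of \<tau>0] tau0_pos by simp
  then have "exp (- \<gamma> * (t - \<tau>0)) * P \<le> y t"
    and "y t \<le> exp (- \<gamma> * (t - \<tau>0)) * P + integral {\<tau>0..t} F"
    using relaxation_bounds[OF assms(1) less_imp_le[OF gamma_pos] y_cont F_continuous y_deriv
        F_nonneg] by auto
  then show "v t \<le> U t" and "U t \<le> v t + integral {\<tau>0..t} F"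
    unfolding v_def y_def by auto
qed

text \<open>A majorant for the forcing: the full amplitude \<open>A\<close> on the two windows where \<open>U\<close> may be
  close to \<open>\<phi>\<^sub>0\<close> (the initial layer \<open>[0,s\<^sub>1]\<close> and the crossing window \<open>[c - w, c + w]\<close>,
  both shifted by the delay \<open>\<tau>\<^sub>0\<close>), and the Gaussian tail \<open>A e\<close> everywhere.\<close>
definition e :: real where "e = exp (- (\<mu>\<^sup>2) / \<delta>)"
definition H :: "real \<Rightarrow> real" where
  "H r = (if r \<in> {\<tau>0..\<tau>0 + s1} then A else 0)
       + (if r \<in> {c + \<tau>0 - w..c + \<tau>0 + w} then A else 0) + A * e"

lemma tail_in_budget: "L * A * e < m"
  unfolding e_def using tail_small delta_pos delta_small by blast

lemma H_lower_bounds: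
  shows "A * e \<le> H r"
    and "r \<in> {\<tau>0..\<tau>0 + s1} \<or> r \<in> {c + \<tau>0 - w..c + \<tau>0 + w} \<Longrightarrow> A \<le> H r"
  unfolding H_def e_def using A_pos by auto

lemma H_integral:
  assumes "\<tau>0 \<le> s" and "s \<le> \<tau>"
  shows "H integrable_on {\<tau>0..s}"
    and "integral {\<tau>0..s} H
         \<le> A * s1 + (if s \<le> c + \<tau>0 - w then 0 else 2 * A * w) + L * A * e"
proof -
  define I1 where "I1 = (if max \<tau>0 \<tau>0 \<le> min (\<tau>0 + s1) s
      then min (\<tau>0 + s1) s - max \<tau>0 \<tau>0 else 0) * A"
  define I2 where "I2 = (if max (c + \<tau>0 - w) \<tau>0 \<le> min (c + \<tau>0 + w) s
      then min (c + \<tau>0 + w) s - max (c + \<tau>0 - w) \<tau>0 else 0) * A"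
  have "(H has_integral
      I1 + I2 + Henstock_Kurzweil_Integration.content {\<tau>0..s} *\<^sub>R (A * e)) {\<tau>0..s}"
    unfolding H_def I1_def I2_def
    by (intro has_integral_add restricted_constant_has_integral has_integral_const_real assms)
  moreover have "I1 \<le> A * s1"
    unfolding I1_def using A_pos layer_bounds(1)
    by (auto simp: min_def intro!: mult_right_mono)
  moreover have "I2 \<le> (if s \<le> c + \<tau>0 - w then 0 else 2 * w) * A"
    unfolding I2_def using A_pos window_bounds(1)
    by (intro mult_right_mono) (auto simp: min_def max_def)
  moreover have "Henstock_Kurzweil_Integration.content {\<tau>0..s} *\<^sub>R (A * e) \<le> L * A * e"
    using assms A_pos unfolding L_def e_def by (auto intro!: mult_right_mono)
  ultimately show "H integrable_on {\<tau>0..s}"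
    and "integral {\<tau>0..s} H
         \<le> A * s1 + (if s \<le> c + \<tau>0 - w then 0 else 2 * A * w) + L * A * e"
    by (auto simp: integral_unique integrable_on_def algebra_simps split: if_splits)
qed

text \<open>Between the initial layer and the crossing window, \<open>U\<close> stays at distance \<open>\<mu>\<close> above
  \<open>\<phi>\<^sub>0\<close>: first by the explicit formula on \<open>[0,\<tau>\<^sub>0]\<close>, then because \<open>U \<ge> v\<close> and \<open>v\<close> decreases
  with slope at least \<open>\<kappa>\<close> towards \<open>v(c) = \<phi>\<^sub>0\<close>.\<close>
lemma separated_before_crossing:
  assumes "s1 < s" and "s < c - w"
  shows "\<mu> \<le> \<bar>U s - \<phi>0\<bar>"
proof (cases "s \<le> \<tau>0")
  case True
  have "exp (- \<gamma> * s) \<le> exp (- \<gamma> * s1)"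
    using assms(1) gamma_pos by simp
  then have "\<epsilon> * exp (- \<gamma> * s) \<le> \<epsilon> * exp (- \<gamma> * s1)"
    using eps_pos by (intro mult_left_mono) auto
  then have "\<epsilon> * (1 - exp (- \<gamma> * s1)) \<le> U s - \<phi>0"
    using U_first_interval[of s] True assms(1) layer_bounds(1) by (simp add: algebra_simps)
  then show ?thesis using separation_bounds(2) by linarith
next
  case False
  have "\<kappa> * (c - s) \<le> v s - v c"
    using False assms(2) crossing window_bounds(1) by (intro v_slope) auto
  moreover have "\<kappa> * w \<le> \<kappa> * (c - s)"
    using assms(2) kappa_pos by (intro mult_left_mono) auto
  moreover have "v s \<le> U s"
    using False assms(2) crossing window_bounds(1) by (intro U_second_interval) auto
  ultimately show ?thesis
    using crossing(3) separation_bounds(3) kappa_pos window_bounds(1) by linarith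
qed

text \<open>After the crossing window \<open>U\<close> stays at distance \<open>\<mu>\<close> below \<open>\<phi>\<^sub>0\<close>, provided the forcing
  is already known to be majorized by \<open>H\<close> up to time \<open>s\<close>: then \<open>\<integral> F\<close> is too small to undo
  the descent of \<open>v\<close> past \<open>\<phi>\<^sub>0\<close>.\<close>
lemma separated_after_crossing:
  assumes "c + w < s" and "s \<le> L"
    and forcing: "\<And>r. r \<in> {\<tau>0..s} \<Longrightarrow> F r \<le> H r"
  shows "\<mu> \<le> \<bar>U s - \<phi>0\<bar>"
proof -
  have s: "\<tau>0 \<le> s" "s \<le> \<tau>"
    using assms(1,2) crossing(1) window_bounds(1) tau0_pos unfolding L_def by linarith+
  have "integral {\<tau>0..s} F \<le> integral {\<tau>0..s} H"
    using forcing by (intro integral_le integrable_continuous_interval F_continuous H_integral(1)[OF s])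
  then have U_s: "U s \<le> v s + integral {\<tau>0..s} H"
    using U_second_interval(2)[OF s] by linarith
  have v_s: "\<kappa> * (s - c) \<le> \<phi>0 - v s"
    using v_slope[of c s] crossing assms(1) window_bounds(1) s by auto
  have "U s \<le> \<phi>0 - \<kappa> * w / 2"
  proof (cases "s \<le> c + \<tau>0 - w")
    case True
    have "\<kappa> * w \<le> \<kappa> * (s - c)"
      using assms(1) kappa_pos by (intro mult_left_mono) auto
    moreover have "integral {\<tau>0..s} H \<le> \<kappa> * w / 2"
      using H_integral(2)[OF s] True layer_bounds(2) tail_in_budget budget_bounds(2) by auto
    ultimately show ?thesis using U_s v_s by linarith
  next
    case False
    have "\<kappa> * (\<tau>0 / 2) \<le> \<kappa> * (s - c)"
      using False window_bounds(2) kappa_pos by (intro mult_left_mono) auto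
    moreover have "\<kappa> * w \<le> \<kappa> * (\<tau>0 / 2)"
      using window_bounds(2) kappa_pos by (intro mult_left_mono) auto
    moreover have "integral {\<tau>0..s} H \<le> A * s1 + 2 * A * w + L * A * e"
      using H_integral(2)[OF s] False by simp
    ultimately show ?thesis
      using U_s v_s layer_bounds(2) window_bounds(3) tail_in_budget budget_bounds(3)
      by linarith
  qed
  then show ?thesis using separation_bounds(3) by linarith
qed

text \<open>The key estimate, by the method of steps with lag \<open>\<tau>\<^sub>0\<close>: on \<open>[0,L]\<close> the Gaussian of the
  solution is majorized by \<open>H\<close> shifted by \<open>\<tau>\<^sub>0\<close>.  Inside the two windows this is \<open>f \<le> A\<close>;
  outside, \<open>U\<close> is separated from \<open>\<phi>\<^sub>0\<close> by \<open>\<mu>\<close> (after the crossing using the estimate on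
  earlier times), so only the tail \<open>A e\<close> remains.\<close>
lemma forcing_majorant:
  assumes "0 \<le> s" and "s \<le> L"
  shows "f (U s) \<le> H (s + \<tau>0)"
proof (rule method_of_steps[where R = "\<lambda>s. f (U s) \<le> H (s + \<tau>0)", OF tau0_pos _ assms])
  fix s assume s: "0 \<le> s" "s \<le> L"
    and earlier: "\<And>r. 0 \<le> r \<Longrightarrow> r \<le> s - \<tau>0 \<Longrightarrow> f (U r) \<le> H (r + \<tau>0)"
  show "f (U s) \<le> H (s + \<tau>0)"
  proof (cases "s \<le> s1 \<or> (c - w \<le> s \<and> s \<le> c + w)")
    case True
    then have "A \<le> H (s + \<tau>0)"
      using s by (intro H_lower_bounds(2)) auto
    then show ?thesis using f_bounds(2) order_trans by blast
  next
    case outside: False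
    have "\<mu> \<le> \<bar>U s - \<phi>0\<bar>"
    proof (cases "s < c - w")
      case True
      then show ?thesis using outside by (intro separated_before_crossing) auto
    next
      case False
      show ?thesis
      proof (rule separated_after_crossing)
        show "c + w < s" using False outside by auto
        show "s \<le> L" by (rule s(2))
        fix r assume "r \<in> {\<tau>0..s}"
        then have "f (U (r - \<tau>0)) \<le> H (r - \<tau>0 + \<tau>0)"
          by (intro earlier) auto
        then show "F r \<le> H r" unfolding F_def by simp
      qed
    qed
    then have "f (U s) \<le> A * e"
      unfolding e_def using A_pos delta_pos separation_bounds(1)
      by (intro f_delta_tail) auto
    then show ?thesis using H_lower_bounds(1) order_trans by blast
  qed
qed

text \<open>Hence the total forcing on \<open>[\<tau>\<^sub>0,\<tau>]\<close> is less than \<open>\<theta>\<close>, and \<open>U(\<tau>) \<le> v(\<tau>) + \<integral> F < 0\<close>.\<close>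
lemma U_tau_negative: "U \<tau> < 0"
proof -
  have "integral {\<tau>0..\<tau>} F \<le> integral {\<tau>0..\<tau>} H"
  proof (rule integral_le[OF integrable_continuous_interval[OF F_continuous] H_integral(1)])
    fix r assume "r \<in> {\<tau>0..\<tau>}"
    then have "f (U (r - \<tau>0)) \<le> H (r - \<tau>0 + \<tau>0)"
      by (intro forcing_majorant) (auto simp: L_def)
    then show "F r \<le> H r" unfolding F_def by simp
  qed (use tau0_less in auto)
  also have "\<dots> \<le> A * s1 + 2 * A * w + L * A * e"
  proof -
    have "0 \<le> 2 * A * w" using A_pos window_bounds(1) by simp
    then show ?thesis using H_integral(2)[of \<tau>] tau0_less by (auto split: if_splits)
  qed
  finally have "integral {\<tau>0..\<tau>} F < \<theta>"
    using layer_bounds(3) window_bounds(4) tail_in_budget budget_bounds(4) theta_pos by linarith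
  then show ?thesis
    using U_second_interval(2)[of \<tau>] v_tau tau0_less by simp
qed

end

theorem (in delay_problem) negative_at_tau:
  assumes history: "\<forall>t\<in>{-\<tau>..0}. \<phi> t = \<phi>0"
    and solutions: "\<forall>\<delta>>0. is_solution \<tau> \<tau>0 \<gamma> (f_delta A \<phi>0 \<delta>) \<phi> (u \<delta>)"
  shows "\<exists>\<delta>0>0. \<forall>\<delta>. 0 < \<delta> \<and> \<delta> < \<delta>0 \<longrightarrow> u \<delta> \<tau> < 0"
proof (intro exI[of _ \<delta>_crit] conjI allI impI)
  show "0 < \<delta>_crit" by (rule delta_crit_pos)
  fix \<delta> assume "0 < \<delta> \<and> \<delta> < \<delta>_crit"
  then interpret delay_solution \<tau> \<tau>0 \<gamma> \<phi>0 \<epsilon> \<phi> "u \<delta>" \<delta>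
    using history solutions by unfold_locales auto
  show "u \<delta> \<tau> < 0" by (rule U_tau_negative)
qed

theorem proposition1:
  fixes \<tau> \<tau>0 \<gamma> \<phi>0 \<epsilon> A :: real
    and \<phi> :: "real \<Rightarrow> real"
    and u :: "real \<Rightarrow> real \<Rightarrow> real"
  assumes "\<tau> > \<tau>0" and "\<tau>0 > 0" and "\<gamma> > 0" and "\<phi>0 > 0" and "\<epsilon> > 0"
    and "\<forall>t\<in>{-\<tau>..0}. \<phi> t = \<phi>0"
    and "A = \<gamma> * (\<phi>0 + \<epsilon>) / (1 - exp (- \<gamma> * (\<tau> - \<tau>0)))"
    and "\<forall>\<delta>>0. is_solution \<tau> \<tau>0 \<gamma> (f_delta A \<phi>0 \<delta>) \<phi> (u \<delta>)"
  shows "(\<forall>\<delta>>0. \<phi> 0 - integral {\<tau>0..\<tau>}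
              (\<lambda>a. f_delta A \<phi>0 \<delta> (\<phi> (- a)) * exp (- \<gamma> * (a - \<tau>0))) = - \<epsilon>)
    \<and> (\<exists>\<delta>0>0. \<forall>\<delta>. 0 < \<delta> \<and> \<delta> < \<delta>0 \<longrightarrow> u \<delta> \<tau> < 0)"
proof -
  have problem: "delay_problem \<tau> \<tau>0 \<gamma> \<phi>0 \<epsilon>"
    using assms(1-5) by unfold_locales auto
  have amplitude: "A = delay_problem.A \<tau> \<tau>0 \<gamma> \<phi>0 \<epsilon>"
    using assms(7) by (simp add: delay_problem.A_def[OF problem] delay_problem.E_def[OF problem])
  have "\<forall>\<delta>>0. is_solution \<tau> \<tau>0 \<gamma> (f_delta (delay_problem.A \<tau> \<tau>0 \<gamma> \<phi>0 \<epsilon>) \<phi>0 \<delta>) \<phi> (u \<delta>)"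
    using assms(8) unfolding amplitude .
  then show ?thesis
    unfolding amplitude
    using delay_problem.history_functional[OF problem assms(6)]
      delay_problem.negative_at_tau[OF problem assms(6)] by blast
qed

end
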